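(* Let $n\ge 2$ be an integer and $A\subseteq L_n$. The subspace $(L_n,\tau(A)|_{L_n})$ of $(X_n,\tau(A))$ is Lindelöf if and only if $L_n\setminus A$ does not contain a closed uncountable subset of $(L_n,\tau_E|_{L_n})$.
   Context: For $\overline{x},\overline{a}\in\mathbb R^n$ let $|\overline{x}-\overline{a}|$ be the Euclidean distance and $B(\overline{a},\epsilon)=\{\overline{x}\in\mathbb R^n:|\overline{x}-\overline{a}|<\epsilon\}$. Let $P_n=\{\overline{x}\in\mathbb R^n: x_n>0\}$, $L_n=\{\overline{x}\in\mathbb R^n: x_n=0\}$, $X_n=P_n\cup L_n$, and let $\tau_E$ denote the Euclidean topology on $X_n$. For $\overline{a}\in L_n$ and $\epsilon>0$ put $\overline{a(\epsilon)}=(a_1,\dots,a_{n-1},\epsilon)$ and $\tilde B(\overline{a},\epsilon)=\{\overline{a}\}\cup B(\overline{a(\epsilon)},\epsilon)$. For $A\subseteq L_n$, the topology $\tau(A)$ on $X_n$ is generated by the local bases: at $\overline{a}\in P_n$, the sets $B(\overline{a},\epsilon)$ with $0<\epsilon<a_n$; at $\overline{a}\in A$, the sets $B(\overline{a},\epsilon)\cap X_n$ with $\epsilon>0$; at $\overline{a}\in L_n\setminus A$, the sets $\tilde B(\overline{a},\epsilon)$ with $\epsilon>0$. *)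

theory Defs
  imports "HOL-Analysis.Analysis"
begin

text \<open>Points of R^n are represented as functions nat => real vanishing at indices >= n;
  coordinates x_1..x_n of the paper are x 0 .. x (n-1); the last coordinate x_n is x (n-1).\<close>

definition Rn :: "nat \<Rightarrow> (nat \<Rightarrow> real) set" where
  "Rn n = {x. \<forall>i\<ge>n. x i = 0}"

definition edist :: "nat \<Rightarrow> (nat \<Rightarrow> real) \<Rightarrow> (nat \<Rightarrow> real) \<Rightarrow> real" where
  "edist n x y = sqrt (\<Sum>i<n. (x i - y i)^2)"

definition eball :: "nat \<Rightarrow> (nat \<Rightarrow> real) \<Rightarrow> real \<Rightarrow> (nat \<Rightarrow> real) set" where
  "eball n a e = {x \<in> Rn n. edist n x a < e}"

definition Pn :: "nat \<Rightarrow> (nat \<Rightarrow> real) set" where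
  "Pn n = {x \<in> Rn n. x (n - 1) > 0}"

definition Ln :: "nat \<Rightarrow> (nat \<Rightarrow> real) set" where
  "Ln n = {x \<in> Rn n. x (n - 1) = 0}"

definition Xn :: "nat \<Rightarrow> (nat \<Rightarrow> real) set" where
  "Xn n = Pn n \<union> Ln n"

definition aeps :: "nat \<Rightarrow> (nat \<Rightarrow> real) \<Rightarrow> real \<Rightarrow> (nat \<Rightarrow> real)" where
  "aeps n a e = a((n - 1) := e)"

definition tball :: "nat \<Rightarrow> (nat \<Rightarrow> real) \<Rightarrow> real \<Rightarrow> (nat \<Rightarrow> real) set" where
  "tball n a e = insert a (eball n (aeps n a e) e)"

definition euclRn :: "nat \<Rightarrow> (nat \<Rightarrow> real) topology" where
  "euclRn n = topology (\<lambda>U. U \<subseteq> Rn n \<and> (\<forall>a\<in>U. \<exists>e>0. eball n a e \<subseteq> U))"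

definition tauE :: "nat \<Rightarrow> (nat \<Rightarrow> real) topology" where
  "tauE n = subtopology (euclRn n) (Xn n)"

definition basic_nbhd :: "nat \<Rightarrow> (nat \<Rightarrow> real) set \<Rightarrow> (nat \<Rightarrow> real) \<Rightarrow> real \<Rightarrow> (nat \<Rightarrow> real) set" where
  "basic_nbhd n A a e =
     (if a \<in> Pn n then eball n a e
      else if a \<in> A then eball n a e \<inter> Xn n
      else tball n a e)"

definition tauA :: "nat \<Rightarrow> (nat \<Rightarrow> real) set \<Rightarrow> (nat \<Rightarrow> real) topology" where
  "tauA n A = topology (\<lambda>U. U \<subseteq> Xn n \<and>
      (\<forall>a\<in>U. \<exists>e>0. (a \<in> Pn n \<longrightarrow> e < a (n - 1)) \<and> basic_nbhd n A a e \<subseteq> U))"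

end

(* On L_n the topology tau(A) is the Euclidean topology with the points of L_n - A made
   isolated, since a half-ball tilde-B(a,e) meets L_n only in a.  For any space obtained from a
   second countable space by isolating the points of a set S, being Lindeloef is equivalent to
   every closed subset of S being countable.  A closed uncountable C inside S yields the open
   cover by the complement of C and the singletons of C, which has no countable subcover.
   Conversely, given an open cover, the interiors of its members in the original topology form
   an open set W, covered by countably many of them because second countable spaces are
   hereditarily Lindeloef; the rest of the space is closed, lies in S, hence is countable. *)

theory Submission
  imports Defs
begin

lemma Lindelof_space_subtopologyD:
  assumes "Lindelof_space (subtopology X S)" and "S \<subseteq> topspace X"
    and "\<forall>U\<in>\<U>. openin X U" and "S \<subseteq> \<Union>\<U>"
  shows "\<exists>\<V>. countable \<V> \<and> \<V> \<subseteq> \<U> \<and> S \<subseteq> \<Union>\<V>"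
  using assms by (simp add: Lindelof_space_subtopology_subset)

text \<open>Points of \<open>S\<close> become isolated, the others keep their neighbourhoods in \<open>X\<close>
  (the Michael line isolates the irrationals of the real line).\<close>

definition isolate_points :: "'a topology \<Rightarrow> 'a set \<Rightarrow> 'a topology" where
  "isolate_points X S = topology (\<lambda>U. U \<subseteq> topspace X \<and> U - S \<subseteq> X interior_of U)"

lemma openin_isolate_points:
  "openin (isolate_points X S) U \<longleftrightarrow> U \<subseteq> topspace X \<and> U - S \<subseteq> X interior_of U"
proof -
  have Int_open: "U \<inter> V \<subseteq> topspace X \<and> U \<inter> V - S \<subseteq> X interior_of (U \<inter> V)"
    if "U \<subseteq> topspace X \<and> U - S \<subseteq> X interior_of U" and "V \<subseteq> topspace X \<and> V - S \<subseteq> X interior_of V"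
    for U V
    using that by (auto simp: interior_of_Int)
  have Union_open: "\<Union>\<K> \<subseteq> topspace X \<and> \<Union>\<K> - S \<subseteq> X interior_of \<Union>\<K>"
    if \<K>: "\<forall>U\<in>\<K>. U \<subseteq> topspace X \<and> U - S \<subseteq> X interior_of U" for \<K>
  proof -
    have "X interior_of U \<subseteq> X interior_of \<Union>\<K>" if "U \<in> \<K>" for U
      using that by (intro interior_of_mono) blast
    with \<K> show ?thesis
      by blast
  qed
  have "istopology (\<lambda>U. U \<subseteq> topspace X \<and> U - S \<subseteq> X interior_of U)"
    unfolding istopology_def using Int_open Union_open by blast
  then show ?thesis
    by (simp add: isolate_points_def)
qed

lemma topspace_isolate_points [simp]: "topspace (isolate_points X S) = topspace X"
proof
  show "topspace (isolate_points X S) \<subseteq> topspace X"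
    using openin_isolate_points [of X S "topspace (isolate_points X S)"] by simp
  show "topspace X \<subseteq> topspace (isolate_points X S)"
    by (rule openin_subset) (simp add: openin_isolate_points interior_of_openin)
qed

lemma openin_isolate_points_if_openin: "openin X U \<Longrightarrow> openin (isolate_points X S) U"
  by (simp add: openin_isolate_points openin_subset interior_of_openin)

lemma countable_closedin_if_Lindelof_isolate_points:
  assumes "Lindelof_space (isolate_points X S)" and "closedin X C" and "C \<subseteq> S"
  shows "countable C"
proof -
  have C_subset: "C \<subseteq> topspace X"
    using assms(2) by (rule closedin_subset)
  have "closedin (isolate_points X S) C"
    using assms(2) by (simp add: closedin_def openin_isolate_points_if_openin)
  then have Lindelof_C: "Lindelof_space (subtopology (isolate_points X S) C)"
    by (rule Lindelof_space_closedin_subtopology [OF assms(1)])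
  have singletons_open: "\<forall>U \<in> (\<lambda>c. {c}) ` C. openin (isolate_points X S) U"
    using C_subset assms(3) by (auto simp: openin_isolate_points)
  have "C \<subseteq> \<Union>((\<lambda>c. {c}) ` C)"
    by blast
  then obtain \<V> where "countable \<V>" "\<V> \<subseteq> (\<lambda>c. {c}) ` C" "C \<subseteq> \<Union>\<V>"
    using Lindelof_space_subtopologyD [OF Lindelof_C _ singletons_open] C_subset by auto
  then obtain C' where "countable C'" "C \<subseteq> \<Union>((\<lambda>c. {c}) ` C')"
    by (metis countable_subset_image)
  then show ?thesis
    by (simp add: countable_subset)
qed

lemma Lindelof_isolate_points_if_countable_closedin:
  assumes "second_countable X"
    and countable_C: "\<And>C. closedin X C \<Longrightarrow> C \<subseteq> S \<Longrightarrow> countable C"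
  shows "Lindelof_space (isolate_points X S)"
  unfolding Lindelof_space_alt topspace_isolate_points
proof (intro allI impI)
  fix \<U> assume \<U>: "(\<forall>U\<in>\<U>. openin (isolate_points X S) U) \<and> topspace X \<subseteq> \<Union>\<U>"
  define W where "W = \<Union>((interior_of) X ` \<U>)"
  have "openin X W"
    unfolding W_def by (rule openin_Union) auto
  have Lindelof_W: "Lindelof_space (subtopology X W)"
    using assms(1) second_countable_subtopology second_countable_imp_Lindelof_space by blast
  have interiors_open: "\<forall>U \<in> (interior_of) X ` \<U>. openin X U"
    by auto
  obtain \<V> where "countable \<V>" "\<V> \<subseteq> (interior_of) X ` \<U>" "W \<subseteq> \<Union>\<V>"
    using Lindelof_space_subtopologyD [OF Lindelof_W _ interiors_open] openin_subset [OF \<open>openin X W\<close>]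
    by (auto simp: W_def)
  then obtain \<U>\<^sub>1 where \<U>\<^sub>1: "countable \<U>\<^sub>1" "\<U>\<^sub>1 \<subseteq> \<U>" "W \<subseteq> \<Union>((interior_of) X ` \<U>\<^sub>1)"
    by (metis countable_subset_image)
  have "\<Union>((interior_of) X ` \<U>\<^sub>1) \<subseteq> \<Union>\<U>\<^sub>1"
    using interior_of_subset by fastforce
  with \<U>\<^sub>1(3) have W_covered: "W \<subseteq> \<Union>\<U>\<^sub>1"
    by (rule subset_trans)
  have "topspace X - S \<subseteq> W"
  proof
    fix a assume a: "a \<in> topspace X - S"
    then obtain U where "U \<in> \<U>" "a \<in> U"
      using \<U> by blast
    with a \<U> have "a \<in> X interior_of U"
      by (auto simp: openin_isolate_points)
    with \<open>U \<in> \<U>\<close> show "a \<in> W"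
      by (auto simp: W_def)
  qed
  define C where "C = topspace X - W"
  have "closedin X C"
    unfolding C_def using \<open>openin X W\<close> by blast
  moreover have "C \<subseteq> S"
    using \<open>topspace X - S \<subseteq> W\<close> by (auto simp: C_def)
  ultimately have "countable C"
    by (rule countable_C)
  then have Lindelof_C: "Lindelof_space (subtopology (isolate_points X S) C)"
    by (simp add: countable_imp_Lindelof_space)
  have C_subset: "C \<subseteq> topspace (isolate_points X S)"
    by (simp add: C_def)
  have \<U>_open: "\<forall>U\<in>\<U>. openin (isolate_points X S) U" and C_covered: "C \<subseteq> \<Union>\<U>"
    using \<U> by (auto simp: C_def)
  obtain \<U>\<^sub>2 where \<U>\<^sub>2: "countable \<U>\<^sub>2" "\<U>\<^sub>2 \<subseteq> \<U>" "C \<subseteq> \<Union>\<U>\<^sub>2"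
    using Lindelof_space_subtopologyD [OF Lindelof_C C_subset \<U>_open C_covered] by blast
  have "topspace X \<subseteq> \<Union>(\<U>\<^sub>1 \<union> \<U>\<^sub>2)"
    using W_covered \<U>\<^sub>2(3) by (auto simp: C_def)
  with \<U>\<^sub>1 \<U>\<^sub>2 show "\<exists>\<V>. countable \<V> \<and> \<V> \<subseteq> \<U> \<and> topspace X \<subseteq> \<Union>\<V>"
    by (intro exI [of _ "\<U>\<^sub>1 \<union> \<U>\<^sub>2"]) auto
qed

lemma Lindelof_space_isolate_points_iff:
  assumes "second_countable X"
  shows "Lindelof_space (isolate_points X S) \<longleftrightarrow> (\<forall>C. C \<subseteq> S \<and> closedin X C \<longrightarrow> countable C)"
  by (meson assms countable_closedin_if_Lindelof_isolate_points
      Lindelof_isolate_points_if_countable_closedin)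

lemma istopology_nested_nbhds:
  fixes R :: "'a \<Rightarrow> real \<Rightarrow> bool" and N :: "'a \<Rightarrow> real \<Rightarrow> 'a set"
  assumes nested: "\<And>a d e. a \<in> S \<Longrightarrow> 0 < d \<Longrightarrow> d \<le> e \<Longrightarrow> R a e \<Longrightarrow> R a d \<and> N a d \<subseteq> N a e"
  shows "istopology (\<lambda>U. U \<subseteq> S \<and> (\<forall>a\<in>U. \<exists>e>0. R a e \<and> N a e \<subseteq> U))"
proof -
  have Int_open: "U \<inter> V \<subseteq> S \<and> (\<forall>a\<in>U \<inter> V. \<exists>e>0. R a e \<and> N a e \<subseteq> U \<inter> V)"
    if U: "U \<subseteq> S \<and> (\<forall>a\<in>U. \<exists>e>0. R a e \<and> N a e \<subseteq> U)"
      and V: "V \<subseteq> S \<and> (\<forall>a\<in>V. \<exists>e>0. R a e \<and> N a e \<subseteq> V)" for U V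
  proof -
    have "\<exists>e>0. R a e \<and> N a e \<subseteq> U \<inter> V" if a: "a \<in> U \<inter> V" for a
    proof -
      obtain d e where "d > 0" "R a d" "N a d \<subseteq> U" "e > 0" "R a e" "N a e \<subseteq> V"
        using U V a by blast
      have "a \<in> S"
        using U a by blast
      have "0 < min d e" "min d e \<le> d" "min d e \<le> e"
        using \<open>d > 0\<close> \<open>e > 0\<close> by auto
      then have "R a (min d e) \<and> N a (min d e) \<subseteq> N a d" "N a (min d e) \<subseteq> N a e"
        using nested [OF \<open>a \<in> S\<close>] \<open>R a d\<close> \<open>R a e\<close> by blast+
      with \<open>0 < min d e\<close> \<open>N a d \<subseteq> U\<close> \<open>N a e \<subseteq> V\<close> show ?thesis
        by blast
    qed
    with U show ?thesis
      by blast
  qed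
  have Union_open: "\<Union>\<K> \<subseteq> S \<and> (\<forall>a\<in>\<Union>\<K>. \<exists>e>0. R a e \<and> N a e \<subseteq> \<Union>\<K>)"
    if "\<forall>U\<in>\<K>. U \<subseteq> S \<and> (\<forall>a\<in>U. \<exists>e>0. R a e \<and> N a e \<subseteq> U)" for \<K>
    using that by (meson Union_iff Union_least Union_upper subset_trans)
  show ?thesis
    unfolding istopology_def using Int_open Union_open by blast
qed

lemma edist_L2: "edist n x y = L2_set (\<lambda>i. x i - y i) {..<n}"
  unfolding edist_def L2_set_def by simp

lemma edist_nonneg: "0 \<le> edist n x y"
  by (simp add: edist_L2)

lemma edist_commute: "edist n x y = edist n y x"
  unfolding edist_def by (simp add: power2_commute)

lemma edist_triangle: "edist n x z \<le> edist n x y + edist n y z"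
proof -
  have "edist n x z = L2_set (\<lambda>i. (x i - y i) + (y i - z i)) {..<n}"
    by (simp add: edist_L2)
  also have "\<dots> \<le> edist n x y + edist n y z"
    unfolding edist_L2 by (rule L2_set_triangle_ineq)
  finally show ?thesis .
qed

lemma edist_eq_0_iff:
  assumes "x \<in> Rn n" and "y \<in> Rn n"
  shows "edist n x y = 0 \<longleftrightarrow> x = y"
proof
  assume "edist n x y = 0"
  then have "\<forall>i<n. x i = y i"
    by (simp add: edist_L2 L2_set_eq_0_iff)
  show "x = y"
  proof
    fix i
    show "x i = y i"
      using \<open>\<forall>i<n. x i = y i\<close> assms by (cases "i < n") (auto simp: Rn_def)
  qed
qed (simp add: edist_def)

lemma edist_coordinate_le:
  assumes "k < n"
  shows "\<bar>x k - y k\<bar> \<le> edist n x y"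
proof -
  have "\<bar>x k - y k\<bar> \<le> L2_set (\<lambda>i. \<bar>x i - y i\<bar>) {..<n}"
    by (rule member_le_L2_set) (use assms in auto)
  also have "\<dots> = edist n x y"
    by (simp add: edist_def L2_set_def)
  finally show ?thesis .
qed

lemma edist_aeps:
  assumes "n \<ge> 1"
  shows "edist n (aeps n a d) (aeps n a e) = \<bar>d - e\<bar>"
proof -
  have "(\<Sum>i<n. (aeps n a d i - aeps n a e i)\<^sup>2) = (\<Sum>i\<in>{n - 1}. (aeps n a d i - aeps n a e i)\<^sup>2)"
    by (rule sum.mono_neutral_right) (use assms in \<open>auto simp: aeps_def\<close>)
  then show ?thesis
    by (simp add: edist_def aeps_def)
qed

interpretation Rn: Metric_space "Rn n" "edist n" for n
  by (intro Metric_space.intro edist_nonneg edist_commute edist_eq_0_iff edist_triangle)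

lemma mball_eq_eball: "a \<in> Rn n \<Longrightarrow> Rn.mball n a e = eball n a e"
  by (auto simp: eball_def edist_commute)

lemma euclRn_eq_mtopology: "euclRn n = Rn.mtopology n"
  unfolding euclRn_def Rn.mtopology_def Rn.mopen_def
  by (metis (no_types, opaque_lifting) mball_eq_eball subsetD)

lemma openin_euclRn: "openin (euclRn n) U \<longleftrightarrow> U \<subseteq> Rn n \<and> (\<forall>a\<in>U. \<exists>e>0. eball n a e \<subseteq> U)"
  unfolding euclRn_eq_mtopology Rn.openin_mtopology by (metis mball_eq_eball subsetD)

lemma openin_euclRn_eball: "a \<in> Rn n \<Longrightarrow> openin (euclRn n) (eball n a e)"
  by (metis Rn.openin_mball euclRn_eq_mtopology mball_eq_eball)

definition rational_points :: "nat \<Rightarrow> (nat \<Rightarrow> real) set" where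
  "rational_points n = {q \<in> Rn n. \<forall>i<n. q i \<in> \<rat>}"

lemma countable_rational_points: "countable (rational_points n)"
proof -
  let ?pad = "\<lambda>xs i. if i < length xs then xs ! i else (0::real)"
  have "rational_points n \<subseteq> ?pad ` lists \<rat>"
  proof
    fix q assume q: "q \<in> rational_points n"
    then have "q = ?pad (map q [0..<n])"
      by (auto simp: rational_points_def Rn_def)
    moreover have "map q [0..<n] \<in> lists \<rat>"
      using q by (auto simp: rational_points_def)
    ultimately show "q \<in> ?pad ` lists \<rat>"
      by blast
  qed
  moreover have "countable (?pad ` lists \<rat>)"
    by (intro countable_image countable_lists countable_rat)
  ultimately show ?thesis
    by (rule countable_subset)
qed

lemma rational_points_dense:
  assumes "x \<in> Rn n" and "\<delta> > 0"
  obtains q where "q \<in> rational_points n" and "edist n q x < \<delta>"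
proof -
  define d where "d = \<delta> / (real n + 1)"
  have "d > 0"
    using assms(2) by (simp add: d_def)
  then have "\<forall>i. \<exists>r\<in>\<rat>. x i - d < r \<and> r < x i + d"
    by (simp add: Rats_dense_in_real)
  then obtain f where f: "\<And>i. f i \<in> \<rat> \<and> \<bar>f i - x i\<bar> < d"
    by (metis abs_diff_less_iff)
  define q where "q i = (if i < n then f i else 0)" for i
  have "q \<in> rational_points n"
    using f by (auto simp: q_def rational_points_def Rn_def)
  moreover have "edist n q x < \<delta>"
  proof -
    have "edist n q x \<le> (\<Sum>i<n. \<bar>q i - x i\<bar>)"
      unfolding edist_L2 by (rule L2_set_le_sum_abs)
    also have "\<dots> \<le> real n * d"
      using sum_bounded_above [of "{..<n}" "\<lambda>i. \<bar>q i - x i\<bar>" d] f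
      by (auto simp: q_def less_imp_le)
    also have "\<dots> < \<delta>"
      using assms(2) by (simp add: d_def field_simps)
    finally show ?thesis .
  qed
  ultimately show ?thesis
    using that by blast
qed

lemma second_countable_euclRn: "second_countable (euclRn n)"
  unfolding second_countable_def
proof (intro exI conjI ballI allI impI)
  let ?\<B> = "(\<lambda>(q, r). eball n q r) ` (rational_points n \<times> \<rat>)"
  show "countable ?\<B>"
    by (intro countable_image countable_SIGMA countable_rational_points countable_rat)
  show "openin (euclRn n) V" if "V \<in> ?\<B>" for V
    using that openin_euclRn_eball by (auto simp: rational_points_def)
  fix U x assume "openin (euclRn n) U \<and> x \<in> U"
  then have x: "x \<in> Rn n" and "\<exists>e>0. eball n x e \<subseteq> U"
    by (auto simp: openin_euclRn)
  then obtain e where "e > 0" "eball n x e \<subseteq> U"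
    by blast
  obtain q where q: "q \<in> rational_points n" "edist n q x < e / 4"
    using rational_points_dense [OF x] \<open>e > 0\<close> by (metis divide_pos_pos zero_less_numeral)
  obtain r where r: "r \<in> \<rat>" "e / 4 < r" "r < e / 2"
    using Rats_dense_in_real [of "e / 4" "e / 2"] \<open>e > 0\<close> by auto
  have "x \<in> eball n q r"
    using x q r by (simp add: eball_def edist_commute)
  moreover have "eball n q r \<subseteq> eball n x e"
  proof
    fix y assume "y \<in> eball n q r"
    moreover have "edist n y x \<le> edist n y q + edist n q x"
      by (rule edist_triangle)
    ultimately show "y \<in> eball n x e"
      using q r by (simp add: eball_def)
  qed
  ultimately show "\<exists>V\<in>?\<B>. x \<in> V \<and> V \<subseteq> U"
    using q(1) r(1) \<open>eball n x e \<subseteq> U\<close> by blast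
qed

lemma tball_mono:
  assumes "n \<ge> 1" and "0 < d" and "d \<le> e"
  shows "tball n a d \<subseteq> tball n a e"
proof -
  have "eball n (aeps n a d) d \<subseteq> eball n (aeps n a e) e"
  proof
    fix y assume "y \<in> eball n (aeps n a d) d"
    moreover have "edist n y (aeps n a e) \<le> edist n y (aeps n a d) + edist n (aeps n a d) (aeps n a e)"
      by (rule edist_triangle)
    ultimately show "y \<in> eball n (aeps n a e) e"
      using assms by (auto simp: eball_def edist_aeps)
  qed
  then show ?thesis
    by (auto simp: tball_def)
qed

lemma basic_nbhd_mono:
  assumes "n \<ge> 1" and "0 < d" and "d \<le> e"
  shows "basic_nbhd n A a d \<subseteq> basic_nbhd n A a e"
proof -
  have "eball n a d \<subseteq> eball n a e"
    using assms(3) by (auto simp: eball_def)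
  then show ?thesis
    using tball_mono [OF assms] by (auto simp: basic_nbhd_def)
qed

lemma openin_tauA:
  assumes "n \<ge> 1"
  shows "openin (tauA n A) U \<longleftrightarrow>
    U \<subseteq> Xn n \<and> (\<forall>a\<in>U. \<exists>e>0. (a \<in> Pn n \<longrightarrow> e < a (n - 1)) \<and> basic_nbhd n A a e \<subseteq> U)"
proof -
  have "istopology (\<lambda>U. U \<subseteq> Xn n \<and>
      (\<forall>a\<in>U. \<exists>e>0. (a \<in> Pn n \<longrightarrow> e < a (n - 1)) \<and> basic_nbhd n A a e \<subseteq> U))"
    by (rule istopology_nested_nbhds) (use basic_nbhd_mono [OF assms] in auto)
  then show ?thesis
    by (simp add: tauA_def)
qed

lemma eball_subset_Pn:
  assumes "n \<ge> 1" and "e \<le> x (n - 1)"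
  shows "eball n x e \<subseteq> Pn n"
proof
  fix y assume y: "y \<in> eball n x e"
  have "\<bar>y (n - 1) - x (n - 1)\<bar> \<le> edist n y x"
    using assms(1) by (intro edist_coordinate_le) auto
  with y assms(2) show "y \<in> Pn n"
    by (auto simp: eball_def Pn_def)
qed

lemma tball_subset:
  assumes "n \<ge> 1"
  shows "tball n a e \<subseteq> insert a (Pn n)"
  using eball_subset_Pn [OF assms, of e "aeps n a e"] assms by (auto simp: tball_def aeps_def)

lemma interior_Ln_if_openin_tauA:
  assumes "n \<ge> 1" and "openin (subtopology (tauA n A) (Ln n)) U"
  shows "A \<inter> U \<subseteq> subtopology (euclRn n) (Ln n) interior_of U"
proof
  fix a assume a: "a \<in> A \<inter> U"
  obtain T where T: "openin (tauA n A) T" "U = T \<inter> Ln n"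
    using assms(2) by (auto simp: openin_subtopology)
  have "a \<in> T" "a \<in> Ln n" "a \<notin> Pn n"
    using a T(2) by (auto simp: Ln_def Pn_def)
  then obtain e where "e > 0" "basic_nbhd n A a e \<subseteq> T"
    using T(1) by (auto simp: openin_tauA [OF assms(1)])
  with a \<open>a \<notin> Pn n\<close> T(2) have "eball n a e \<inter> Ln n \<subseteq> U"
    by (auto simp: basic_nbhd_def Xn_def)
  moreover have "openin (subtopology (euclRn n) (Ln n)) (eball n a e \<inter> Ln n)"
    using \<open>a \<in> Ln n\<close> by (intro openin_subtopology_Int openin_euclRn_eball) (simp add: Ln_def)
  moreover have "a \<in> eball n a e \<inter> Ln n"
    using \<open>a \<in> Ln n\<close> \<open>e > 0\<close> by (simp add: eball_def edist_def Ln_def)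
  ultimately show "a \<in> subtopology (euclRn n) (Ln n) interior_of U"
    by (auto simp: interior_of_def)
qed

lemma openin_tauA_if_interior_Ln:
  assumes "n \<ge> 1" and "U \<subseteq> Ln n" and "A \<inter> U \<subseteq> subtopology (euclRn n) (Ln n) interior_of U"
  shows "openin (tauA n A) (U \<union> Pn n)"
proof -
  have "\<exists>e>0. (a \<in> Pn n \<longrightarrow> e < a (n - 1)) \<and> basic_nbhd n A a e \<subseteq> U \<union> Pn n"
    if a: "a \<in> U \<union> Pn n" for a
  proof (cases "a \<in> Pn n")
    case True
    then have "a (n - 1) > 0"
      by (simp add: Pn_def)
    with True show ?thesis
      using eball_subset_Pn [OF assms(1), of "a (n - 1) / 2" a]
      by (intro exI [of _ "a (n - 1) / 2"]) (auto simp: basic_nbhd_def)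
  next
    case not_Pn: False
    with a have "a \<in> U"
      by blast
    show ?thesis
    proof (cases "a \<in> A")
      case True
      with assms(3) \<open>a \<in> U\<close> obtain V
        where "openin (subtopology (euclRn n) (Ln n)) V" "a \<in> V" "V \<subseteq> U"
        by (auto simp: interior_of_def)
      then obtain T where "openin (euclRn n) T" "V = T \<inter> Ln n"
        by (auto simp: openin_subtopology)
      with \<open>a \<in> V\<close> obtain e where "e > 0" "eball n a e \<subseteq> T"
        by (auto simp: openin_euclRn)
      with not_Pn True \<open>V = T \<inter> Ln n\<close> \<open>V \<subseteq> U\<close> show ?thesis
        by (intro exI [of _ e]) (auto simp: basic_nbhd_def Xn_def)
    next
      case False
      with not_Pn \<open>a \<in> U\<close> show ?thesis
        using tball_subset [OF assms(1), of a 1] by (intro exI [of _ 1]) (auto simp: basic_nbhd_def)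
    qed
  qed
  moreover have "U \<union> Pn n \<subseteq> Xn n"
    using assms(2) by (auto simp: Xn_def)
  ultimately show ?thesis
    by (simp add: openin_tauA [OF assms(1)])
qed

lemma subtopology_tauA_Ln:
  assumes "n \<ge> 1"
  shows "subtopology (tauA n A) (Ln n) = isolate_points (subtopology (euclRn n) (Ln n)) (Ln n - A)"
  unfolding topology_eq openin_isolate_points
proof (intro allI iffI conjI)
  fix U
  assume U: "openin (subtopology (tauA n A) (Ln n)) U"
  then have "U \<subseteq> Ln n"
    by (auto simp: openin_subtopology)
  then show "U \<subseteq> topspace (subtopology (euclRn n) (Ln n))"
    by (auto simp: euclRn_eq_mtopology Ln_def)
  show "U - (Ln n - A) \<subseteq> subtopology (euclRn n) (Ln n) interior_of U"
    using interior_Ln_if_openin_tauA [OF assms U] \<open>U \<subseteq> Ln n\<close> by blast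
next
  fix U
  assume U: "U \<subseteq> topspace (subtopology (euclRn n) (Ln n)) \<and>
    U - (Ln n - A) \<subseteq> subtopology (euclRn n) (Ln n) interior_of U"
  then have "U \<subseteq> Ln n" and "A \<inter> U \<subseteq> subtopology (euclRn n) (Ln n) interior_of U"
    by auto
  then have "openin (tauA n A) (U \<union> Pn n)"
    by (rule openin_tauA_if_interior_Ln [OF assms])
  moreover have "U = (U \<union> Pn n) \<inter> Ln n"
    using \<open>U \<subseteq> Ln n\<close> by (auto simp: Ln_def Pn_def)
  ultimately show "openin (subtopology (tauA n A) (Ln n)) U"
    by (metis openin_subtopology_Int)
qed

theorem mainTheorem11:
  fixes n :: nat and A :: "(nat \<Rightarrow> real) set"
  assumes "n \<ge> 2" and "A \<subseteq> Ln n"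
  shows "Lindelof_space (subtopology (tauA n A) (Ln n)) \<longleftrightarrow>
         \<not> (\<exists>C. C \<subseteq> Ln n - A \<and> closedin (subtopology (tauE n) (Ln n)) C \<and> uncountable C)"
proof -
  have "n \<ge> 1"
    using assms(1) by simp
  have "subtopology (tauE n) (Ln n) = subtopology (euclRn n) (Ln n)"
    by (auto simp: tauE_def subtopology_subtopology Xn_def Int_absorb1)
  moreover have "second_countable (subtopology (euclRn n) (Ln n))"
    by (intro second_countable_subtopology second_countable_euclRn)
  ultimately show ?thesis
    by (simp add: subtopology_tauA_Ln [OF \<open>n \<ge> 1\<close>] Lindelof_space_isolate_points_iff) blast
qed

end
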